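(* Let $N$ be a binary tree-based network. Then each connected component of $\mathcal{J}_N$ is one of the following: (i) a cycle; (ii) a path whose end vertices are tree vertices of $N$, neither of which is an omnian; (iii) a path whose end vertices are tree vertices of $N$, exactly one of which is an omnian.
   Context: A phylogenetic network on a nonempty finite set $X$ is a rooted acyclic digraph with no parallel arcs such that: the unique root has out-degree at least one; $X$ is exactly the set of vertices of out-degree zero (leaves), each of in-degree one; every other vertex either has in-degree one and out-degree at least two (a tree vertex) or in-degree at least two and out-degree one (a reticulation). It is binary if every tree vertex has out-degree two and every reticulation has in-degree two. An omnian is a non-leaf vertex all of whose children are reticulations. $N$ is tree-based if it has a spanning tree rooted at the root of $N$ all of whose leaves lie in $X$. Let $R_t$ be the set of reticulations of $N$ with no reticulation parent, and $Q_t$ the set of vertices of $N$ having a child in $R_t$. $\mathcal{J}_N$ is the bipartite graph with vertex bipartition $\{Q_t,R_t\}$ and an edge $\{q,r\}$ for each arc $(q,r)$ of $N$ with $q\in Q_t$, $r\in R_t$. *)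

theory Defs
  imports Main
begin

definition indeg :: "('a \<times> 'a) set \<Rightarrow> 'a \<Rightarrow> nat" where
  "indeg A v = card {u. (u, v) \<in> A}"

definition outdeg :: "('a \<times> 'a) set \<Rightarrow> 'a \<Rightarrow> nat" where
  "outdeg A v = card {w. (v, w) \<in> A}"

text \<open>Phylogenetic network on X with root rho (arcs as a set: no parallel arcs).\<close>
definition phylo_network :: "'a set \<Rightarrow> ('a \<times> 'a) set \<Rightarrow> 'a set \<Rightarrow> 'a \<Rightarrow> bool" where
  "phylo_network V A X rho \<longleftrightarrow>
     finite V \<and> A \<subseteq> V \<times> V \<and> acyclic A \<and> rho \<in> V \<and>
     (\<forall>v\<in>V. indeg A v = 0 \<longleftrightarrow> v = rho) \<and> outdeg A rho \<ge> 1 \<and>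
     X \<noteq> {} \<and> X = {v \<in> V. outdeg A v = 0} \<and> (\<forall>x\<in>X. indeg A x = 1) \<and>
     (\<forall>v \<in> V - {rho} - X.
        (indeg A v = 1 \<and> outdeg A v \<ge> 2) \<or> (indeg A v \<ge> 2 \<and> outdeg A v = 1))"

text \<open>Tree vertex: in-degree at most one and out-degree at least two (the root counts
  as a tree vertex when it has out-degree at least two).\<close>
definition tree_vertex :: "'a set \<Rightarrow> ('a \<times> 'a) set \<Rightarrow> 'a \<Rightarrow> bool" where
  "tree_vertex V A v \<longleftrightarrow> v \<in> V \<and> indeg A v \<le> 1 \<and> outdeg A v \<ge> 2"

definition reticulation :: "'a set \<Rightarrow> ('a \<times> 'a) set \<Rightarrow> 'a \<Rightarrow> bool" where
  "reticulation V A v \<longleftrightarrow> v \<in> V \<and> indeg A v \<ge> 2"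

definition binary_network :: "'a set \<Rightarrow> ('a \<times> 'a) set \<Rightarrow> 'a set \<Rightarrow> 'a \<Rightarrow> bool" where
  "binary_network V A X rho \<longleftrightarrow> phylo_network V A X rho \<and>
     (\<forall>v\<in>V. tree_vertex V A v \<longrightarrow> outdeg A v = 2) \<and>
     (\<forall>v\<in>V. reticulation V A v \<longrightarrow> indeg A v = 2) \<and>
     outdeg A rho \<le> 2"

definition omnian :: "'a set \<Rightarrow> ('a \<times> 'a) set \<Rightarrow> 'a set \<Rightarrow> 'a \<Rightarrow> bool" where
  "omnian V A X v \<longleftrightarrow> v \<in> V \<and> v \<notin> X \<and> (\<forall>c. (v, c) \<in> A \<longrightarrow> reticulation V A c)"

text \<open>Tree-based: a spanning arborescence rooted at rho (every non-root vertex has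
  exactly one incoming tree arc) all of whose leaves lie in X.\<close>
definition tree_based :: "'a set \<Rightarrow> ('a \<times> 'a) set \<Rightarrow> 'a set \<Rightarrow> 'a \<Rightarrow> bool" where
  "tree_based V A X rho \<longleftrightarrow>
     (\<exists>T \<subseteq> A. (\<forall>v \<in> V - {rho}. card {u. (u, v) \<in> T} = 1) \<and>
               (\<forall>v\<in>V. (\<forall>w. (v, w) \<notin> T) \<longrightarrow> v \<in> X))"

definition R_t :: "'a set \<Rightarrow> ('a \<times> 'a) set \<Rightarrow> 'a set" where
  "R_t V A = {r. reticulation V A r \<and> (\<forall>p. (p, r) \<in> A \<longrightarrow> \<not> reticulation V A p)}"

definition Q_t :: "'a set \<Rightarrow> ('a \<times> 'a) set \<Rightarrow> 'a set" where
  "Q_t V A = {q \<in> V. \<exists>r \<in> R_t V A. (q, r) \<in> A}"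

definition J_vertices :: "'a set \<Rightarrow> ('a \<times> 'a) set \<Rightarrow> 'a set" where
  "J_vertices V A = Q_t V A \<union> R_t V A"

definition J_edges :: "'a set \<Rightarrow> ('a \<times> 'a) set \<Rightarrow> 'a set set" where
  "J_edges V A = {{q, r} | q r. (q, r) \<in> A \<and> q \<in> Q_t V A \<and> r \<in> R_t V A}"

definition ug_components :: "'a set \<Rightarrow> 'a set set \<Rightarrow> 'a set set" where
  "ug_components W E = {{w. (v, w) \<in> {(x, y). {x, y} \<in> E}\<^sup>*} | v. v \<in> W}"

definition is_path_on :: "'a set \<Rightarrow> 'a set set \<Rightarrow> 'a list \<Rightarrow> bool" where
  "is_path_on C E ps \<longleftrightarrow> ps \<noteq> [] \<and> distinct ps \<and> set ps = C \<and>
     (\<forall>u\<in>C. \<forall>v\<in>C. {u, v} \<in> E \<longleftrightarrow>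
        (\<exists>i. Suc i < length ps \<and> {u, v} = {ps ! i, ps ! Suc i}))"

definition is_cycle_on :: "'a set \<Rightarrow> 'a set set \<Rightarrow> 'a list \<Rightarrow> bool" where
  "is_cycle_on C E ps \<longleftrightarrow> length ps \<ge> 3 \<and> distinct ps \<and> set ps = C \<and>
     (\<forall>u\<in>C. \<forall>v\<in>C. {u, v} \<in> E \<longleftrightarrow>
        (\<exists>i < length ps. {u, v} = {ps ! i, ps ! ((Suc i) mod length ps)}))"

end

theory Submission
  imports Defs
begin

text \<open>Every vertex of \<open>J_N\<close> has degree at most two: a vertex of \<open>Q_t\<close> is adjacent only
  to its at most two children, a vertex of \<open>R_t\<close> only to its two parents. Hence a longest simple
  path in a component exhausts it, and the component is a cycle or a path. The ends of a path
  component cannot lie in \<open>R_t\<close>, whose vertices have two neighbours, so the path alternates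
  between \<open>Q_t\<close> and \<open>R_t\<close>, starting and ending in \<open>Q_t\<close>: it has one more \<open>Q_t\<close>-vertex
  than \<open>R_t\<close>-vertices, and its ends are tree vertices. If both ends were omnians, every child of
  every \<open>Q_t\<close>-vertex of the component would be a reticulation (an interior \<open>Q_t\<close>-vertex has both
  its children on the path). A base tree must then leave each of these vertices by an arc into
  \<open>R_t\<close>, and uniqueness of base-tree parents makes this an injection from the \<open>Q_t\<close>-vertices
  of the component into its \<open>R_t\<close>-vertices, contradicting the count.\<close>

section \<open>Lists, paths and cycles\<close>

lemma doubleton_nth_eq_iff:
  assumes "distinct xs" "i < length xs" "j < length xs" "k < length xs" "l < length xs"
  shows "{xs ! i, xs ! j} = {xs ! k, xs ! l} \<longleftrightarrow> i = k \<and> j = l \<or> i = l \<and> j = k"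
  using assms by (auto simp: doubleton_eq_iff nth_eq_iff_index_eq)

lemma ball_set_pairs_conv_nth:
  "(\<forall>u\<in>set xs. \<forall>v\<in>set xs. P u v) \<longleftrightarrow> (\<forall>i<length xs. \<forall>j<length xs. P (xs ! i) (xs ! j))"
  by (simp add: all_set_conv_all_nth)

lemma is_path_on_iff_nth:
  "is_path_on C E ps \<longleftrightarrow> ps \<noteq> [] \<and> distinct ps \<and> set ps = C \<and>
     (\<forall>i < length ps. \<forall>j < length ps. {ps ! i, ps ! j} \<in> E \<longleftrightarrow> j = Suc i \<or> i = Suc j)"
proof -
  have consecutive: "(\<exists>k. Suc k < length ps \<and> {ps ! i, ps ! j} = {ps ! k, ps ! Suc k})
      \<longleftrightarrow> j = Suc i \<or> i = Suc j"
    if "distinct ps" "i < length ps" "j < length ps" for i j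
    using that doubleton_nth_eq_iff[OF that] by (metis Suc_lessD)
  show ?thesis
  proof (cases "distinct ps \<and> set ps = C")
    case True
    then have "C = set ps" by simp
    with True show ?thesis
      unfolding is_path_on_def by (simp add: ball_set_pairs_conv_nth consecutive)
  qed (auto simp: is_path_on_def)
qed

lemma is_cycle_on_iff_nth:
  "is_cycle_on C E ps \<longleftrightarrow> length ps \<ge> 3 \<and> distinct ps \<and> set ps = C \<and>
     (\<forall>i < length ps. \<forall>j < length ps.
        {ps ! i, ps ! j} \<in> E \<longleftrightarrow> j = Suc i mod length ps \<or> i = Suc j mod length ps)"
proof -
  have consecutive: "(\<exists>k < length ps. {ps ! i, ps ! j} = {ps ! k, ps ! (Suc k mod length ps)})
      \<longleftrightarrow> j = Suc i mod length ps \<or> i = Suc j mod length ps"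
    if "distinct ps" "i < length ps" "j < length ps" for i j
  proof -
    have "{ps ! i, ps ! j} = {ps ! k, ps ! (Suc k mod length ps)} \<longleftrightarrow>
        i = k \<and> j = Suc k mod length ps \<or> i = Suc k mod length ps \<and> j = k" if "k < length ps" for k
    proof -
      have "Suc k mod length ps < length ps" using that by (intro mod_less_divisor) linarith
      with that show ?thesis
        using doubleton_nth_eq_iff[OF \<open>distinct ps\<close> \<open>i < length ps\<close> \<open>j < length ps\<close>] by blast
    qed
    then show ?thesis using that by auto
  qed
  show ?thesis
  proof (cases "distinct ps \<and> set ps = C")
    case True
    then have "C = set ps" by simp
    with True show ?thesis
      unfolding is_cycle_on_def by (simp add: ball_set_pairs_conv_nth consecutive)
  qed (auto simp: is_cycle_on_def)
qed

lemma is_path_on_successively: "is_path_on C E ps \<Longrightarrow> successively (\<lambda>x y. {x, y} \<in> E) ps"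
  by (auto simp: is_path_on_iff_nth successively_conv_nth)

lemma is_path_on_end_neighbours_eq:
  assumes path: "is_path_on C E ps" and u: "u = hd ps \<or> u = last ps"
    and "a \<in> C" "b \<in> C" "{u, a} \<in> E" "{u, b} \<in> E"
  shows "a = b"
proof -
  have ps: "ps \<noteq> []" "set ps = C"
    and edge_iff: "\<And>i j. i < length ps \<Longrightarrow> j < length ps \<Longrightarrow> {ps ! i, ps ! j} \<in> E \<longleftrightarrow> j = Suc i \<or> i = Suc j"
    using path by (auto simp: is_path_on_iff_nth)
  obtain k where k: "k = 0 \<or> k = length ps - 1" "u = ps ! k"
    using u ps(1) by (auto simp: hd_conv_nth last_conv_nth)
  obtain i j where ij: "i < length ps" "a = ps ! i" "j < length ps" "b = ps ! j"
    using assms(3,4) ps(2) by (auto simp: in_set_conv_nth)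
  have "k < length ps"
    using k(1) ps(1) by auto
  then have "i = Suc k \<or> k = Suc i" "j = Suc k \<or> k = Suc j"
    using edge_iff[of k i] edge_iff[of k j] ij k(2) assms(5,6) by auto
  then have "i = j"
    using k(1) ij(1,3) by arith
  with ij show ?thesis
    by simp
qed

lemma is_path_on_interior_neighbours:
  assumes path: "is_path_on C E ps" and "u \<in> C" "u \<noteq> hd ps" "u \<noteq> last ps"
  obtains a b where "a \<noteq> b" "a \<in> C" "b \<in> C" "{u, a} \<in> E" "{u, b} \<in> E"
proof -
  have ps: "ps \<noteq> []" "distinct ps" "set ps = C"
    and edge_iff: "\<And>i j. i < length ps \<Longrightarrow> j < length ps \<Longrightarrow> {ps ! i, ps ! j} \<in> E \<longleftrightarrow> j = Suc i \<or> i = Suc j"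
    using path by (auto simp: is_path_on_iff_nth)
  obtain i where i: "i < length ps" "u = ps ! i"
    using assms(2) ps(3) by (auto simp: in_set_conv_nth)
  have "i \<noteq> 0" "i \<noteq> length ps - 1"
    using assms(3,4) i ps(1) by (metis hd_conv_nth, metis last_conv_nth)
  then have "0 < i" "Suc i < length ps"
    using i(1) by linarith+
  show ?thesis
  proof (rule that)
    show "ps ! (i - 1) \<noteq> ps ! Suc i"
      using \<open>Suc i < length ps\<close> ps(2) by (simp add: nth_eq_iff_index_eq)
    show "ps ! (i - 1) \<in> C" "ps ! Suc i \<in> C"
      using \<open>Suc i < length ps\<close> ps(3) by auto
    show "{u, ps ! (i - 1)} \<in> E" "{u, ps ! Suc i} \<in> E"
      using edge_iff[of i "i - 1"] edge_iff[of i "Suc i"] i \<open>0 < i\<close> \<open>Suc i < length ps\<close> by auto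
  qed
qed

lemma ug_components_edge_closed:
  "C \<in> ug_components W E \<Longrightarrow> \<forall>u\<in>C. \<forall>w. {u, w} \<in> E \<longrightarrow> w \<in> C"
  by (auto simp: ug_components_def intro: rtrancl_into_rtrancl)

lemma ug_components_subset:
  assumes "C \<in> ug_components W E" and "\<And>x y. {x, y} \<in> E \<Longrightarrow> y \<in> W"
  shows "C \<subseteq> W"
proof
  fix w assume "w \<in> C"
  with assms(1) obtain v where "(v, w) \<in> {(x, y). {x, y} \<in> E}\<^sup>*" "v \<in> W"
    by (auto simp: ug_components_def)
  then show "w \<in> W"
    by (induction rule: rtrancl_induct) (auto intro: assms(2))
qed

lemma card_alternating_list:
  assumes "distinct xs" "successively (\<lambda>x y. P x \<longleftrightarrow> \<not> P y) xs" "xs \<noteq> []" "P (hd xs)" "P (last xs)"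
  shows "card {x \<in> set xs. P x} = Suc (card {x \<in> set xs. \<not> P x})"
  using assms
proof (induction xs rule: induct_list012)
  case (3 x y zs)
  then have "zs \<noteq> []" "P (hd zs)"
    by (auto simp: successively_Cons)
  with 3 have "card {x \<in> set zs. P x} = Suc (card {x \<in> set zs. \<not> P x})"
    by (auto simp: successively_Cons)
  moreover have "{v \<in> set (x # y # zs). P v} = insert x {v \<in> set zs. P v}"
    "{v \<in> set (x # y # zs). \<not> P v} = insert y {v \<in> set zs. \<not> P v}"
    using 3 by auto
  ultimately show ?case
    using "3.prems"(1) by simp
next
  case (2 x)
  then have "{v \<in> set [x]. P v} = {x}" "{v \<in> set [x]. \<not> P v} = {}"
    by auto
  then show ?case
    by simp
qed simp

lemma card_le_2_not_three_distinct:
  assumes "finite S" "card S \<le> 2" "a \<in> S" "b \<in> S" "c \<in> S"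
  shows "a = b \<or> a = c \<or> b = c"
proof (rule ccontr)
  assume "\<not> ?thesis"
  then have "card {a, b, c} = 3" by auto
  moreover have "card {a, b, c} \<le> card S"
    using assms by (intro card_mono) auto
  ultimately show False
    using assms(2) by simp
qed

section \<open>Graphs of maximum degree two\<close>

definition simple_path :: "'a set set \<Rightarrow> 'a list \<Rightarrow> bool" where
  "simple_path E ps \<longleftrightarrow> ps \<noteq> [] \<and> distinct ps \<and> successively (\<lambda>x y. {x, y} \<in> E) ps"

lemma exists_longest_simple_path:
  assumes "finite C" "v \<in> C"
  obtains ps where "simple_path E ps" "set ps \<subseteq> C"
    "\<And>qs. simple_path E qs \<Longrightarrow> set qs \<subseteq> C \<Longrightarrow> length qs \<le> length ps"
proof -
  have bounded: "length qs < Suc (card C)" if "simple_path E qs" "set qs \<subseteq> C" for qs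
    using that assms(1) by (metis simple_path_def distinct_card card_mono less_Suc_eq_le)
  have "simple_path E [v] \<and> set [v] \<subseteq> C"
    using assms(2) by (simp add: simple_path_def)
  then show ?thesis
    using ex_has_greatest_nat[of "\<lambda>qs. simple_path E qs \<and> set qs \<subseteq> C" "[v]" length "Suc (card C)"]
      bounded that by blast
qed

locale max_degree_2_graph =
  fixes E :: "'a set set"
  assumes finite_vertices: "finite (\<Union>E)"
    and no_loop: "{x} \<notin> E"
    and degree_le_2: "{v, a} \<in> E \<Longrightarrow> {v, b} \<in> E \<Longrightarrow> {v, c} \<in> E \<Longrightarrow> a = b \<or> a = c \<or> b = c"
begin

abbreviation adj :: "('a \<times> 'a) set" where
  "adj \<equiv> {(x, y). {x, y} \<in> E}"

lemma sym_adj: "sym adj"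
  by (auto simp: sym_def insert_commute)

lemma finite_component: "finite {w. (v, w) \<in> adj\<^sup>*}"
proof (rule finite_subset)
  show "{w. (v, w) \<in> adj\<^sup>*} \<subseteq> insert v (\<Union>E)"
    by (auto elim: rtranclE)
  show "finite (insert v (\<Union>E))"
    using finite_vertices by simp
qed

lemma simple_path_interior_neighbour:
  assumes "simple_path E ps" "0 < i" "Suc i < length ps" "{ps ! i, w} \<in> E"
  shows "w = ps ! (i - 1) \<or> w = ps ! Suc i"
proof -
  have "{ps ! (i - 1), ps ! i} \<in> E" "{ps ! i, ps ! Suc i} \<in> E"
    using assms successively_nth[of _ ps "i - 1"] successively_nth[of _ ps i]
    by (auto simp: simple_path_def)
  moreover have "ps ! (i - 1) \<noteq> ps ! Suc i"
    using assms by (simp add: simple_path_def nth_eq_iff_index_eq)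
  ultimately show ?thesis
    using degree_le_2[OF assms(4)] by (metis insert_commute)
qed

lemma simple_path_edge_nth:
  assumes path: "simple_path E ps" and "i < j" "j < length ps" and edge: "{ps ! i, ps ! j} \<in> E"
  shows "j = Suc i \<or> i = 0 \<and> j = length ps - 1"
proof (cases "0 < i")
  case True
  have "ps ! j \<noteq> ps ! (i - 1)" "ps ! j = ps ! Suc i \<Longrightarrow> j = Suc i"
    using assms path by (auto simp: simple_path_def nth_eq_iff_index_eq)
  with simple_path_interior_neighbour[OF path True _ edge] assms show ?thesis
    by linarith
next
  case False
  then have "i = 0" by simp
  show ?thesis
  proof (cases "Suc j < length ps")
    case True
    have "{ps ! j, ps ! i} \<in> E"
      using edge by (simp add: insert_commute)
    then have "ps ! i = ps ! (j - 1) \<or> ps ! i = ps ! Suc j"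
      using simple_path_interior_neighbour[OF path _ True] assms by simp
    then have "i = j - 1"
      using assms True path by (auto simp: simple_path_def nth_eq_iff_index_eq)
    then show ?thesis
      using \<open>i < j\<close> by simp
  next
    case False
    then show ?thesis
      using \<open>i = 0\<close> assms by linarith
  qed
qed

lemma simple_path_edge_nth_iff:
  assumes path: "simple_path E ps" and "i < length ps" "j < length ps"
  shows "{ps ! i, ps ! j} \<in> E \<longleftrightarrow> j = Suc i \<or> i = Suc j \<or>
           {i, j} = {0, length ps - 1} \<and> {ps ! 0, ps ! (length ps - 1)} \<in> E"
proof
  assume edge: "{ps ! i, ps ! j} \<in> E"
  then have "i \<noteq> j"
    using no_loop by auto
  then consider "i < j" | "j < i"
    by linarith
  then show "j = Suc i \<or> i = Suc j \<or> {i, j} = {0, length ps - 1} \<and> {ps ! 0, ps ! (length ps - 1)} \<in> E"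
  proof cases
    case 1
    then show ?thesis
      using simple_path_edge_nth[OF path 1 \<open>j < length ps\<close> edge] edge by auto
  next
    case 2
    have "{ps ! j, ps ! i} \<in> E"
      using edge by (simp add: insert_commute)
    then show ?thesis
      using simple_path_edge_nth[OF path 2 \<open>i < length ps\<close>] by (auto simp: insert_commute)
  qed
next
  have "{ps ! k, ps ! Suc k} \<in> E" if "Suc k < length ps" for k
    using path that successively_nth by (auto simp: simple_path_def)
  then show "j = Suc i \<or> i = Suc j \<or> {i, j} = {0, length ps - 1} \<and> {ps ! 0, ps ! (length ps - 1)} \<in> E
      \<Longrightarrow> {ps ! i, ps ! j} \<in> E"
    using assms by (auto simp: doubleton_eq_iff insert_commute)
qed

lemma simple_path_induces_cycle_or_path:
  assumes path: "simple_path E ps"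
  shows "is_cycle_on (set ps) E ps \<or> is_path_on (set ps) E ps"
proof -
  let ?n = "length ps"
  have "distinct ps" "?n \<ge> 1"
    using path by (auto simp: simple_path_def Suc_le_eq)
  show ?thesis
  proof (cases "?n \<ge> 3 \<and> {ps ! 0, ps ! (?n - 1)} \<in> E")
    case True
    have "j = Suc i \<or> i = Suc j \<or> {i, j} = {0, ?n - 1} \<longleftrightarrow> j = Suc i mod ?n \<or> i = Suc j mod ?n"
      if "i < ?n" "j < ?n" for i j
      using that True by (auto simp: mod_Suc doubleton_eq_iff)
    then have "is_cycle_on (set ps) E ps"
      using True \<open>distinct ps\<close> simple_path_edge_nth_iff[OF path]
      by (simp add: is_cycle_on_iff_nth)
    then show ?thesis ..
  next
    case False
    have "j = Suc i \<or> i = Suc j" if "{i, j} = {0, ?n - 1}" "{ps ! 0, ps ! (?n - 1)} \<in> E" for i j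
    proof -
      have "?n \<noteq> 1"
        using that(2) no_loop by auto
      then have "?n = 2"
        using False that(2) \<open>?n \<ge> 1\<close> by linarith
      then show ?thesis
        using that(1) by (auto simp: doubleton_eq_iff)
    qed
    then have "j = Suc i \<or> i = Suc j \<or> {i, j} = {0, ?n - 1} \<and> {ps ! 0, ps ! (?n - 1)} \<in> E
        \<longleftrightarrow> j = Suc i \<or> i = Suc j" for i j
      by blast
    then have "is_path_on (set ps) E ps"
      using \<open>distinct ps\<close> simple_path_edge_nth_iff[OF path] path
      by (simp add: is_path_on_iff_nth simple_path_def)
    then show ?thesis ..
  qed
qed

context
  fixes C :: "'a set" and ps :: "'a list"
  assumes edge_closed: "\<forall>u\<in>C. \<forall>w. {u, w} \<in> E \<longrightarrow> w \<in> C"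
    and path: "simple_path E ps" and path_in: "set ps \<subseteq> C"
    and longest: "\<And>qs. simple_path E qs \<Longrightarrow> set qs \<subseteq> C \<Longrightarrow> length qs \<le> length ps"
begin

lemma longest_path_end_neighbour:
  assumes "u = hd ps \<or> u = last ps" and edge: "{u, w} \<in> E"
  shows "w \<in> set ps"
proof (rule ccontr)
  assume new: "w \<notin> set ps"
  have "u \<in> C"
    using assms path path_in by (auto simp: simple_path_def)
  then have "set (w # ps) \<subseteq> C" "set (ps @ [w]) \<subseteq> C"
    using edge_closed edge path_in by auto
  moreover have "simple_path E (w # ps) \<or> simple_path E (ps @ [w])"
    using assms new path
    by (auto simp: simple_path_def successively_append_iff successively_Cons insert_commute)
  ultimately show False
    using longest[of "w # ps"] longest[of "ps @ [w]"] by auto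
qed

lemma longest_path_neighbour:
  assumes "u \<in> set ps" "{u, w} \<in> E"
  shows "w \<in> set ps"
proof -
  obtain i where i: "i < length ps" "u = ps ! i"
    using assms(1) by (auto simp: in_set_conv_nth)
  show ?thesis
  proof (cases "0 < i \<and> Suc i < length ps")
    case True
    then show ?thesis
      using simple_path_interior_neighbour[OF path _ _ assms(2)[unfolded i(2)]] by auto
  next
    case False
    then have "i = 0 \<or> i = length ps - 1"
      using i(1) by linarith
    then have "u = hd ps \<or> u = last ps"
      using i path by (auto simp: simple_path_def hd_conv_nth last_conv_nth)
    then show ?thesis
      using longest_path_end_neighbour assms(2) by blast
  qed
qed

lemma longest_path_covers_component:
  assumes C: "C = {w. (v, w) \<in> adj\<^sup>*}"
  shows "set ps = C"
proof
  show "C \<subseteq> set ps"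
  proof
    fix w assume "w \<in> C"
    have "hd ps \<in> C"
      using path path_in by (auto simp: simple_path_def)
    then have "(hd ps, w) \<in> adj\<^sup>*"
      using C \<open>w \<in> C\<close> sym_adj by (blast intro: rtrancl_trans symD[OF sym_rtrancl])
    then show "w \<in> set ps"
    proof (induction rule: rtrancl_induct)
      case base
      then show ?case
        using path by (simp add: simple_path_def)
    next
      case (step x y)
      then show ?case
        using longest_path_neighbour by blast
    qed
  qed
qed (rule path_in)

end

lemma component_path_or_cycle:
  assumes C: "C = {w. (v, w) \<in> adj\<^sup>*}"
  shows "(\<exists>ps. is_cycle_on C E ps) \<or> (\<exists>ps. is_path_on C E ps)"
proof -
  have closed: "\<forall>u\<in>C. \<forall>w. {u, w} \<in> E \<longrightarrow> w \<in> C"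
    using C by (auto intro: rtrancl_into_rtrancl)
  obtain ps where path: "simple_path E ps" "set ps \<subseteq> C"
    and longest: "\<And>qs. simple_path E qs \<Longrightarrow> set qs \<subseteq> C \<Longrightarrow> length qs \<le> length ps"
    using exists_longest_simple_path[of C v E] C finite_component by auto
  have "set ps = C"
    using closed path longest C by (rule longest_path_covers_component)
  with simple_path_induces_cycle_or_path[OF path(1)] show ?thesis
    by auto
qed

end

section \<open>Phylogenetic networks and the graph \<open>J_N\<close>\<close>

lemma phylo_network_finite_children:
  "phylo_network V A X rho \<Longrightarrow> finite {w. (v, w) \<in> A}"
  unfolding phylo_network_def by (auto intro: finite_subset[of _ V])

lemma phylo_network_finite_parents:
  "phylo_network V A X rho \<Longrightarrow> finite {u. (u, v) \<in> A}"
  unfolding phylo_network_def by (auto intro: finite_subset[of _ V])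

lemma phylo_network_inner_vertex:
  "phylo_network V A X rho \<Longrightarrow> v \<in> V - {rho} - X \<Longrightarrow>
     indeg A v = 1 \<and> outdeg A v \<ge> 2 \<or> indeg A v \<ge> 2 \<and> outdeg A v = 1"
  unfolding phylo_network_def by blast

lemma phylo_network_reticulation:
  assumes N: "phylo_network V A X rho" and "reticulation V A p"
  shows "p \<in> V" "p \<noteq> rho" "p \<notin> X" "outdeg A p = 1"
proof -
  show "p \<in> V"
    using assms(2) by (simp add: reticulation_def)
  have "indeg A p \<ge> 2"
    using assms(2) by (simp add: reticulation_def)
  moreover have "indeg A rho = 0" "\<forall>x\<in>X. indeg A x = 1"
    using N by (auto simp: phylo_network_def)
  ultimately show "p \<noteq> rho" "p \<notin> X"
    by auto
  with \<open>p \<in> V\<close> \<open>indeg A p \<ge> 2\<close> show "outdeg A p = 1"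
    using phylo_network_inner_vertex[OF N, of p] by auto
qed

lemma binary_network_outdeg_le_2:
  assumes N: "binary_network V A X rho" and "v \<in> V"
  shows "outdeg A v \<le> 2"
proof -
  consider "v = rho" | "v \<in> X" | "v \<in> V - {rho} - X"
    using assms(2) by blast
  then show ?thesis
  proof cases
    case 1
    then show ?thesis using N by (simp add: binary_network_def)
  next
    case 2
    then show ?thesis using N by (simp add: binary_network_def phylo_network_def)
  next
    case 3
    then have "outdeg A v = 1 \<or> tree_vertex V A v"
      using phylo_network_inner_vertex[of V A X rho v] N by (auto simp: binary_network_def tree_vertex_def)
    then show ?thesis
      using N \<open>v \<in> V\<close> by (auto simp: binary_network_def)
  qed
qed

lemma binary_network_indeg_le_2:
  assumes N: "binary_network V A X rho" and "v \<in> V"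
  shows "indeg A v \<le> 2"
  using assms unfolding binary_network_def reticulation_def by fastforce

lemma phylo_network_reachable_from_root:
  assumes N: "phylo_network V A X rho" and "v \<in> V"
  shows "(rho, v) \<in> A\<^sup>*"
proof -
  have "finite A" "acyclic A"
    using N finite_subset[of A "V \<times> V"] by (auto simp: phylo_network_def)
  then have "wf A"
    by (rule finite_acyclic_wf)
  then show ?thesis
    using \<open>v \<in> V\<close>
  proof (induction v rule: wf_induct_rule)
    case (less v)
    show ?case
    proof (cases "v = rho")
      case False
      then have "indeg A v \<noteq> 0"
        using N less.prems by (simp add: phylo_network_def)
      then obtain u where "(u, v) \<in> A"
        by (metis Collect_empty_eq card.empty indeg_def)
      moreover from this have "u \<in> V"
        using N by (auto simp: phylo_network_def)
      ultimately show ?thesis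
        using less.IH by (blast intro: rtrancl_into_rtrancl)
    qed simp
  qed
qed

text \<open>Every non-root vertex descends from the only child \<open>r\<close> of the root; for a second parent
  of \<open>r\<close> this closes a directed cycle.\<close>

lemma phylo_network_sole_root_child_not_reticulation:
  assumes N: "phylo_network V A X rho" and "outdeg A rho = 1" and "(rho, r) \<in> A"
  shows "\<not> reticulation V A r"
proof
  assume "reticulation V A r"
  then have "2 \<le> card {u. (u, r) \<in> A}"
    by (simp add: reticulation_def indeg_def)
  then have "\<not> {u. (u, r) \<in> A} \<subseteq> {rho}"
    using card_mono[of "{rho}" "{u. (u, r) \<in> A}"] by auto
  then obtain p where p: "(p, r) \<in> A" "p \<noteq> rho"
    by blast
  obtain z where "{w. (rho, w) \<in> A} = {z}"
    using assms(2) by (auto simp: outdeg_def card_1_singleton_iff)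
  with assms(3) have children: "{w. (rho, w) \<in> A} = {r}"
    by auto
  have "p \<in> V"
    using N p by (auto simp: phylo_network_def)
  then have "(rho, p) \<in> A\<^sup>+"
    using phylo_network_reachable_from_root[OF N] p(2) by (blast dest: rtranclD)
  then obtain c where "(rho, c) \<in> A" "(c, p) \<in> A\<^sup>*"
    by (blast dest: tranclD)
  with children have "(r, p) \<in> A\<^sup>*"
    by (metis mem_Collect_eq singletonD)
  then have "(r, r) \<in> A\<^sup>+"
    using p(1) by (rule rtrancl_into_trancl1)
  with N show False
    by (simp add: phylo_network_def acyclic_def)
qed

lemma Q_t_not_reticulation: "q \<in> Q_t V A \<Longrightarrow> q \<in> V \<and> \<not> reticulation V A q"
  unfolding Q_t_def R_t_def by blast

lemma R_t_reticulation: "r \<in> R_t V A \<Longrightarrow> reticulation V A r"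
  by (simp add: R_t_def)

lemma Q_t_R_t_disjoint: "Q_t V A \<inter> R_t V A = {}"
  by (blast dest: Q_t_not_reticulation R_t_reticulation)

lemma Q_t_not_leaf:
  assumes N: "phylo_network V A X rho" and q: "q \<in> Q_t V A"
  shows "q \<notin> X"
proof -
  obtain r where "(q, r) \<in> A"
    using q by (auto simp: Q_t_def)
  then have "outdeg A q \<noteq> 0"
    using phylo_network_finite_children[OF N, of q] by (auto simp: outdeg_def)
  with N show ?thesis
    by (simp add: phylo_network_def)
qed

lemma Q_t_tree_vertex:
  assumes N: "phylo_network V A X rho" and q: "q \<in> Q_t V A"
  shows "tree_vertex V A q"
proof -
  obtain r where r: "r \<in> R_t V A" "(q, r) \<in> A"
    using q by (auto simp: Q_t_def)
  have "q \<in> V" "indeg A q \<le> 1"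
    using Q_t_not_reticulation[OF q] by (auto simp: reticulation_def)
  moreover have "q \<notin> X"
    using Q_t_not_leaf[OF N q] .
  moreover have "outdeg A rho \<ge> 2" if "q = rho"
  proof -
    have "outdeg A rho \<noteq> 1"
      using phylo_network_sole_root_child_not_reticulation[OF N, of r] R_t_reticulation[OF r(1)] r(2) that
      by blast
    with N show ?thesis
      by (simp add: phylo_network_def)
  qed
  ultimately show ?thesis
    using phylo_network_inner_vertex[OF N, of q] by (cases "q = rho") (auto simp: tree_vertex_def)
qed

lemma R_t_two_parents:
  assumes N: "binary_network V A X rho" and r: "r \<in> R_t V A"
  obtains p1 p2 where "p1 \<noteq> p2" "(p1, r) \<in> A" "(p2, r) \<in> A" "p1 \<in> Q_t V A" "p2 \<in> Q_t V A"
proof -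
  have "indeg A r = 2"
    using N R_t_reticulation[OF r] by (simp add: binary_network_def reticulation_def)
  then obtain p1 p2 where parents: "{u. (u, r) \<in> A} = {p1, p2}" "p1 \<noteq> p2"
    by (auto simp: indeg_def card_2_iff)
  then have "(p1, r) \<in> A" "(p2, r) \<in> A"
    by auto
  moreover from this have "p1 \<in> V" "p2 \<in> V"
    using N by (auto simp: binary_network_def phylo_network_def)
  ultimately show ?thesis
    using that[OF parents(2)] r by (auto simp: Q_t_def)
qed

lemma doubleton_in_J_edges_iff:
  "{x, y} \<in> J_edges V A \<longleftrightarrow>
     x \<in> Q_t V A \<and> y \<in> R_t V A \<and> (x, y) \<in> A \<or> y \<in> Q_t V A \<and> x \<in> R_t V A \<and> (y, x) \<in> A"
proof
  assume "{x, y} \<in> J_edges V A"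
  then obtain q r where "{x, y} = {q, r}" "(q, r) \<in> A" "q \<in> Q_t V A" "r \<in> R_t V A"
    unfolding J_edges_def by blast
  then show "x \<in> Q_t V A \<and> y \<in> R_t V A \<and> (x, y) \<in> A \<or> y \<in> Q_t V A \<and> x \<in> R_t V A \<and> (y, x) \<in> A"
    by (auto simp: doubleton_eq_iff)
next
  assume "x \<in> Q_t V A \<and> y \<in> R_t V A \<and> (x, y) \<in> A \<or> y \<in> Q_t V A \<and> x \<in> R_t V A \<and> (y, x) \<in> A"
  then show "{x, y} \<in> J_edges V A"
    unfolding J_edges_def by (auto simp: insert_commute)
qed

lemma binary_network_J_max_degree_2:
  assumes N: "binary_network V A X rho"
  shows "max_degree_2_graph (J_edges V A)"
proof
  have "\<Union>(J_edges V A) \<subseteq> V"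
    unfolding J_edges_def by (auto dest: Q_t_not_reticulation simp: R_t_def reticulation_def)
  then show "finite (\<Union>(J_edges V A))"
    using N finite_subset by (auto simp: binary_network_def phylo_network_def)
  show "{x} \<notin> J_edges V A" for x
    using doubleton_in_J_edges_iff[of x x V A] Q_t_R_t_disjoint[of V A] by auto
  have P: "phylo_network V A X rho"
    using N by (simp add: binary_network_def)
  fix v a b c
  assume edges: "{v, a} \<in> J_edges V A" "{v, b} \<in> J_edges V A" "{v, c} \<in> J_edges V A"
  show "a = b \<or> a = c \<or> b = c"
  proof (cases "v \<in> Q_t V A")
    case True
    then have "(v, a) \<in> A" "(v, b) \<in> A" "(v, c) \<in> A" "v \<in> V"
      using edges Q_t_R_t_disjoint[of V A] Q_t_not_reticulation[OF True]
      by (auto simp: doubleton_in_J_edges_iff)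
    then show ?thesis
      using card_le_2_not_three_distinct[OF phylo_network_finite_children[OF P],
          OF binary_network_outdeg_le_2[OF N \<open>v \<in> V\<close>, unfolded outdeg_def]]
      by blast
  next
    case False
    then have "(a, v) \<in> A" "(b, v) \<in> A" "(c, v) \<in> A" "v \<in> V"
      using edges R_t_reticulation[of v V A] by (auto simp: doubleton_in_J_edges_iff reticulation_def)
    then show ?thesis
      using card_le_2_not_three_distinct[OF phylo_network_finite_parents[OF P],
          OF binary_network_indeg_le_2[OF N \<open>v \<in> V\<close>, unfolded indeg_def]]
      by blast
  qed
qed

section \<open>Base trees and path components of \<open>J_N\<close>\<close>

definition base_tree :: "'a set \<Rightarrow> ('a \<times> 'a) set \<Rightarrow> 'a set \<Rightarrow> 'a \<Rightarrow> ('a \<times> 'a) set \<Rightarrow> bool" where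
  "base_tree V A X rho T \<longleftrightarrow> T \<subseteq> A \<and> (\<forall>v \<in> V - {rho}. card {u. (u, v) \<in> T} = 1) \<and>
     (\<forall>v\<in>V. (\<forall>w. (v, w) \<notin> T) \<longrightarrow> v \<in> X)"

lemma tree_based_iff_base_tree: "tree_based V A X rho \<longleftrightarrow> (\<exists>T. base_tree V A X rho T)"
  unfolding tree_based_def base_tree_def by blast

lemma base_tree_parent_unique:
  assumes "base_tree V A X rho T" "v \<in> V - {rho}" "(u, v) \<in> T" "(u', v) \<in> T"
  shows "u = u'"
proof -
  have "card {u. (u, v) \<in> T} = 1"
    using assms(1,2) by (simp add: base_tree_def)
  then obtain p where "{u. (u, v) \<in> T} = {p}"
    by (auto simp: card_1_singleton_iff)
  with assms(3,4) show ?thesis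
    by (metis mem_Collect_eq singletonD)
qed

text \<open>If the child reached by the base-tree arc had a reticulation parent \<open>p\<close>, the only arc
  leaving \<open>p\<close> would also belong to the base tree, giving that child two base-tree parents.\<close>

lemma base_tree_arc_to_R_t:
  assumes N: "phylo_network V A X rho" and T: "base_tree V A X rho T"
    and q: "q \<in> V" "q \<notin> X" "\<not> reticulation V A q"
    and children: "\<And>c. (q, c) \<in> A \<Longrightarrow> reticulation V A c"
  obtains r where "(q, r) \<in> T" "r \<in> R_t V A"
proof -
  obtain r where qr: "(q, r) \<in> T"
    using T q unfolding base_tree_def by blast
  then have ret: "reticulation V A r"
    using T children by (auto simp: base_tree_def)
  have "\<not> reticulation V A p" if "(p, r) \<in> A" for p
  proof
    assume "reticulation V A p"
    note p = phylo_network_reticulation[OF N this]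
    obtain r' where pr': "(p, r') \<in> T"
      using T p(1,3) unfolding base_tree_def by blast
    obtain z where "{w. (p, w) \<in> A} = {z}"
      using p(4) by (auto simp: outdeg_def card_1_singleton_iff)
    moreover have "(p, r') \<in> A"
      using pr' T by (auto simp: base_tree_def)
    ultimately have "r' = r"
      using \<open>(p, r) \<in> A\<close> by (metis mem_Collect_eq singletonD)
    then have "p = q"
      using base_tree_parent_unique[OF T _ qr] pr' phylo_network_reticulation[OF N ret] by blast
    then show False
      using q(3) \<open>reticulation V A p\<close> by blast
  qed
  with ret have "r \<in> R_t V A"
    by (simp add: R_t_def)
  with qr that show ?thesis
    by blast
qed

lemma J_path_end_in_Q_t:
  assumes N: "binary_network V A X rho" and path: "is_path_on C (J_edges V A) ps"
    and closed: "\<forall>u\<in>C. \<forall>w. {u, w} \<in> J_edges V A \<longrightarrow> w \<in> C"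
    and sub: "C \<subseteq> J_vertices V A" and u: "u = hd ps \<or> u = last ps"
  shows "u \<in> Q_t V A"
proof (rule ccontr)
  assume "u \<notin> Q_t V A"
  have "u \<in> C"
    using path u by (auto simp: is_path_on_def)
  with sub \<open>u \<notin> Q_t V A\<close> have "u \<in> R_t V A"
    by (auto simp: J_vertices_def)
  then obtain p1 p2 where p: "p1 \<noteq> p2" "(p1, u) \<in> A" "(p2, u) \<in> A" "p1 \<in> Q_t V A" "p2 \<in> Q_t V A"
    by (rule R_t_two_parents[OF N])
  with \<open>u \<in> R_t V A\<close> have "{u, p1} \<in> J_edges V A" "{u, p2} \<in> J_edges V A"
    by (auto simp: doubleton_in_J_edges_iff)
  then show False
    using is_path_on_end_neighbours_eq[OF path u] closed \<open>u \<in> C\<close> p(1) by blast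
qed

lemma J_path_card_Q_t:
  assumes path: "is_path_on C (J_edges V A) ps" and sub: "C \<subseteq> J_vertices V A"
    and ends: "hd ps \<in> Q_t V A" "last ps \<in> Q_t V A"
  shows "card (C \<inter> Q_t V A) = Suc (card (C \<inter> R_t V A))"
proof -
  have ps: "distinct ps" "ps \<noteq> []" "set ps = C"
    using path by (auto simp: is_path_on_def)
  have "successively (\<lambda>x y. x \<in> Q_t V A \<longleftrightarrow> y \<notin> Q_t V A) ps"
    using is_path_on_successively[OF path]
    by (rule successively_mono) (use Q_t_R_t_disjoint[of V A] in \<open>auto simp: doubleton_in_J_edges_iff\<close>)
  then have "card {x \<in> set ps. x \<in> Q_t V A} = Suc (card {x \<in> set ps. x \<notin> Q_t V A})"
    by (rule card_alternating_list[OF ps(1) _ ps(2) ends])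
  moreover have "{x \<in> set ps. x \<in> Q_t V A} = C \<inter> Q_t V A" "{x \<in> set ps. x \<notin> Q_t V A} = C \<inter> R_t V A"
    using ps(3) sub Q_t_R_t_disjoint[of V A] by (auto simp: J_vertices_def)
  ultimately show ?thesis
    by simp
qed

lemma J_path_interior_Q_t_children:
  assumes N: "binary_network V A X rho" and path: "is_path_on C (J_edges V A) ps"
    and q: "q \<in> C" "q \<in> Q_t V A" "q \<noteq> hd ps" "q \<noteq> last ps" and "(q, c) \<in> A"
  shows "c \<in> R_t V A"
proof -
  obtain a b where ab: "a \<noteq> b" "{q, a} \<in> J_edges V A" "{q, b} \<in> J_edges V A"
    using is_path_on_interior_neighbours[OF path q(1,3,4)] by metis
  with q(2) have "(q, a) \<in> A" "(q, b) \<in> A" "a \<in> R_t V A" "b \<in> R_t V A"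
    using Q_t_R_t_disjoint[of V A] by (auto simp: doubleton_in_J_edges_iff)
  moreover have "q \<in> V"
    using Q_t_not_reticulation[OF q(2)] by simp
  moreover have "finite {w. (q, w) \<in> A}"
    using N phylo_network_finite_children by (auto simp: binary_network_def)
  ultimately have "c = a \<or> c = b"
    using card_le_2_not_three_distinct[of "{w. (q, w) \<in> A}" c a b]
      binary_network_outdeg_le_2[OF N] ab(1) \<open>(q, c) \<in> A\<close> by (auto simp: outdeg_def)
  with \<open>a \<in> R_t V A\<close> \<open>b \<in> R_t V A\<close> show ?thesis
    by blast
qed

lemma base_tree_card_Q_t_le_card_R_t:
  assumes P: "phylo_network V A X rho" and T: "base_tree V A X rho T"
    and closed: "\<forall>u\<in>C. \<forall>w. {u, w} \<in> J_edges V A \<longrightarrow> w \<in> C" and "finite C"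
    and children: "\<And>q c. q \<in> C \<inter> Q_t V A \<Longrightarrow> (q, c) \<in> A \<Longrightarrow> reticulation V A c"
  shows "card (C \<inter> Q_t V A) \<le> card (C \<inter> R_t V A)"
proof -
  \<comment> \<open>the base-tree parent map sends \<open>C \<inter> R_t\<close> onto \<open>C \<inter> Q_t\<close>\<close>
  define parent where "parent r = (THE u. (u, r) \<in> T)" for r
  have "C \<inter> Q_t V A \<subseteq> parent ` (C \<inter> R_t V A)"
  proof
    fix q assume q: "q \<in> C \<inter> Q_t V A"
    then have "q \<in> V" "q \<notin> X" "\<not> reticulation V A q"
      using Q_t_not_reticulation[of q V A] Q_t_not_leaf[OF P] by auto
    with children[OF q] obtain r where r: "(q, r) \<in> T" "r \<in> R_t V A"
      using base_tree_arc_to_R_t[OF P T] by blast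
    then have "{q, r} \<in> J_edges V A"
      using q T by (auto simp: doubleton_in_J_edges_iff base_tree_def)
    with q closed have "r \<in> C"
      by blast
    have "r \<in> V - {rho}"
      using phylo_network_reticulation[OF P R_t_reticulation[OF r(2)]] by simp
    then have "parent r = q"
      unfolding parent_def using r(1) base_tree_parent_unique[OF T] by blast
    with \<open>r \<in> C\<close> r(2) show "q \<in> parent ` (C \<inter> R_t V A)"
      by blast
  qed
  then show ?thesis
    using \<open>finite C\<close> by (intro surj_card_le) auto
qed

lemma J_path_ends_not_both_omnian:
  assumes N: "binary_network V A X rho" and T: "base_tree V A X rho T"
    and path: "is_path_on C (J_edges V A) ps"
    and closed: "\<forall>u\<in>C. \<forall>w. {u, w} \<in> J_edges V A \<longrightarrow> w \<in> C"
    and sub: "C \<subseteq> J_vertices V A"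
  shows "\<not> (omnian V A X (hd ps) \<and> omnian V A X (last ps))"
proof
  assume omnian: "omnian V A X (hd ps) \<and> omnian V A X (last ps)"
  have "reticulation V A c" if q: "q \<in> C \<inter> Q_t V A" and "(q, c) \<in> A" for q c
  proof (cases "q = hd ps \<or> q = last ps")
    case True
    with omnian \<open>(q, c) \<in> A\<close> show ?thesis
      by (auto simp: omnian_def)
  next
    case False
    with q show ?thesis
      by (intro R_t_reticulation J_path_interior_Q_t_children[OF N path _ _ _ _ \<open>(q, c) \<in> A\<close>]) auto
  qed
  moreover have "finite C"
    using path by (auto simp: is_path_on_def)
  moreover have "phylo_network V A X rho"
    using N by (simp add: binary_network_def)
  ultimately have "card (C \<inter> Q_t V A) \<le> card (C \<inter> R_t V A)"
    using base_tree_card_Q_t_le_card_R_t[OF _ T closed] by blast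
  moreover have "hd ps \<in> Q_t V A" "last ps \<in> Q_t V A"
    using J_path_end_in_Q_t[OF N path closed sub] by blast+
  ultimately show False
    using J_path_card_Q_t[OF path sub] by simp
qed

theorem lemma2:
  assumes "binary_network V A X rho"
    and "tree_based V A X rho"
    and "C \<in> ug_components (J_vertices V A) (J_edges V A)"
  shows "(\<exists>ps. is_cycle_on C (J_edges V A) ps)
       \<or> (\<exists>ps. is_path_on C (J_edges V A) ps
              \<and> tree_vertex V A (hd ps) \<and> tree_vertex V A (last ps)
              \<and> \<not> omnian V A X (hd ps) \<and> \<not> omnian V A X (last ps))
       \<or> (\<exists>ps. is_path_on C (J_edges V A) ps
              \<and> tree_vertex V A (hd ps) \<and> tree_vertex V A (last ps)
              \<and> (omnian V A X (hd ps) \<longleftrightarrow> \<not> omnian V A X (last ps)))"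
proof -
  interpret J: max_degree_2_graph "J_edges V A"
    using assms(1) by (rule binary_network_J_max_degree_2)
  obtain v where "C = {w. (v, w) \<in> J.adj\<^sup>*}"
    using assms(3) by (auto simp: ug_components_def)
  then consider (cycle) ps where "is_cycle_on C (J_edges V A) ps"
    | (path) ps where "is_path_on C (J_edges V A) ps"
    using J.component_path_or_cycle by blast
  then show ?thesis
  proof cases
    case (path ps)
    have closed: "\<forall>u\<in>C. \<forall>w. {u, w} \<in> J_edges V A \<longrightarrow> w \<in> C"
      using ug_components_edge_closed[OF assms(3)] .
    have sub: "C \<subseteq> J_vertices V A"
      using assms(3) by (rule ug_components_subset) (auto simp: doubleton_in_J_edges_iff J_vertices_def)
    obtain T where T: "base_tree V A X rho T"
      using assms(2) by (auto simp: tree_based_iff_base_tree)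
    have "phylo_network V A X rho"
      using assms(1) by (simp add: binary_network_def)
    then have "tree_vertex V A u" if "u = hd ps \<or> u = last ps" for u
      using J_path_end_in_Q_t[OF assms(1) path closed sub that] by (rule Q_t_tree_vertex)
    moreover have "\<not> (omnian V A X (hd ps) \<and> omnian V A X (last ps))"
      by (rule J_path_ends_not_both_omnian[OF assms(1) T path closed sub])
    ultimately show ?thesis
      using path by blast
  qed blast
qed

end
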